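(* Let $\mathcal G$ be a core network with input nodes $\iota_1,\dots,\iota_n$ and output node $o$, and let $\rho_k>\rho_{k+1}$ be two adjacent absolutely super-simple nodes. Then $\mathcal L'_m(\rho_k,\rho_{k+1})=\mathcal L'(\rho_k,\rho_{k+1})$ for every $m=1,\dots,n$.
   Context: Node $b$ is downstream from $a$ (and $a$ upstream from $b$) if there is a directed path from $a$ to $b$. Core network: every node upstream from $o$ and downstream from at least one input. $\mathcal G_m$: nodes downstream from $\iota_m$ and upstream from $o$, with arrows of $\mathcal G$ between them. Simple path: visits each node at most once; $\iota_mo$-simple path: simple path from $\iota_m$ to $o$. A node is $\iota_m$-simple if on some $\iota_mo$-simple path, $\iota_m$-appendage if downstream from $\iota_m$ but not $\iota_m$-simple; absolutely simple/absolutely appendage if $\iota_m$-simple/$\iota_m$-appendage for all $m$. $\iota_m$-super-simple: $\iota_m$-simple and on every $\iota_mo$-simple path; they occur in the same order on all $\iota_mo$-simple paths and adjacent means consecutive. Absolutely super-simple: on every $\iota_mo$-simple path for every $m$; ordered $\rho_1>\cdots>\rho_p>o$ ($b$ after $a$ on every such path), adjacent = consecutive. For a subnetwork $\mathcal K$, $\mathcal K$-path equivalence means directed paths inside $\mathcal K$ both ways. For an $\iota_mo$-simple path $S$: $C_mS$ = nodes of $\mathcal G_m$ not on $S$ with arrows of $\mathcal G_m$ between them; $CS$ = nodes of $\mathcal G$ not on $S$ with arrows of $\mathcal G$ between them. $\mathcal L_m(\rho_k,\rho_{k+1})$: $\iota_m$-simple nodes $\rho$ such that some $\iota_mo$-simple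 path visits $\rho_k,\rho,\rho_{k+1}$ in that order (arrows of $\mathcal G_m$ among them). $\mathcal L(\rho_k,\rho_{k+1})$: absolutely simple nodes $\rho$ such that for some $m$ some $\iota_mo$-simple path visits $\rho_k,\rho,\rho_{k+1}$ in that order. $\mathcal L'_m(\rho_k,\rho_{k+1})$: nodes of $\mathcal L_m(\rho_k,\rho_{k+1})$ together with all $\iota_m$-appendage nodes that are $C_mS_m$-path equivalent to nodes of $\mathcal L_m(\rho_k,\rho_{k+1})$ for some $\iota_mo$-simple path $S_m$, with arrows of $\mathcal G_m$ among them. $\mathcal L'(\rho_k,\rho_{k+1})$ (absolutely super-simple structural subnetwork): nodes of $\mathcal L(\rho_k,\rho_{k+1})$ together with all absolutely appendage nodes that are $CS_m$-path equivalent to nodes in $\mathcal L(\rho_k,\rho_{k+1})$ for some $\iota_mo$-simple path $S_m$ and some $m$, with arrows of $\mathcal G$ among them. *)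

theory Defs
  imports Main
begin

definition is_path :: "('a \<times> 'a) set \<Rightarrow> 'a list \<Rightarrow> bool" where
  "is_path E xs \<longleftrightarrow> xs \<noteq> [] \<and> (\<forall>i. Suc i < length xs \<longrightarrow> (xs ! i, xs ! Suc i) \<in> E)"

definition downstream :: "('a \<times> 'a) set \<Rightarrow> 'a \<Rightarrow> 'a \<Rightarrow> bool" where
  "downstream E a b \<longleftrightarrow> (\<exists>xs. is_path E xs \<and> hd xs = a \<and> last xs = b)"

definition core_network ::
  "'a set \<Rightarrow> ('a \<times> 'a) set \<Rightarrow> (nat \<Rightarrow> 'a) \<Rightarrow> nat \<Rightarrow> 'a \<Rightarrow> bool" where
  "core_network V E inp n out \<longleftrightarrow>
     finite V \<and> E \<subseteq> V \<times> V \<and> n \<ge> 1 \<and> inp ` {1..n} \<subseteq> V \<and> out \<in> V \<and>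
     inj_on inp {1..n} \<and> out \<notin> inp ` {1..n} \<and>
     (\<forall>v\<in>V. downstream E v out \<and> (\<exists>m\<in>{1..n}. downstream E (inp m) v))"

definition io_simple_path :: "('a \<times> 'a) set \<Rightarrow> 'a \<Rightarrow> 'a \<Rightarrow> 'a list \<Rightarrow> bool" where
  "io_simple_path E i out S \<longleftrightarrow> is_path E S \<and> distinct S \<and> hd S = i \<and> last S = out"

definition simple_node :: "('a \<times> 'a) set \<Rightarrow> 'a \<Rightarrow> 'a \<Rightarrow> 'a \<Rightarrow> bool" where
  "simple_node E i out v \<longleftrightarrow> (\<exists>S. io_simple_path E i out S \<and> v \<in> set S)"

definition appendage_node :: "('a \<times> 'a) set \<Rightarrow> 'a \<Rightarrow> 'a \<Rightarrow> 'a \<Rightarrow> bool" where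
  "appendage_node E i out v \<longleftrightarrow> downstream E i v \<and> \<not> simple_node E i out v"

definition abs_simple :: "('a \<times> 'a) set \<Rightarrow> (nat \<Rightarrow> 'a) \<Rightarrow> nat \<Rightarrow> 'a \<Rightarrow> 'a \<Rightarrow> bool" where
  "abs_simple E inp n out v \<longleftrightarrow> (\<forall>m\<in>{1..n}. simple_node E (inp m) out v)"

definition abs_appendage :: "('a \<times> 'a) set \<Rightarrow> (nat \<Rightarrow> 'a) \<Rightarrow> nat \<Rightarrow> 'a \<Rightarrow> 'a \<Rightarrow> bool" where
  "abs_appendage E inp n out v \<longleftrightarrow> (\<forall>m\<in>{1..n}. appendage_node E (inp m) out v)"

definition abs_super_simple :: "('a \<times> 'a) set \<Rightarrow> (nat \<Rightarrow> 'a) \<Rightarrow> nat \<Rightarrow> 'a \<Rightarrow> 'a \<Rightarrow> bool" where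
  "abs_super_simple E inp n out v \<longleftrightarrow>
     (\<forall>m\<in>{1..n}. \<forall>S. io_simple_path E (inp m) out S \<longrightarrow> v \<in> set S)"

definition abs_before :: "('a \<times> 'a) set \<Rightarrow> (nat \<Rightarrow> 'a) \<Rightarrow> nat \<Rightarrow> 'a \<Rightarrow> 'a \<Rightarrow> 'a \<Rightarrow> bool" where
  "abs_before E inp n out a b \<longleftrightarrow>
     (\<forall>m\<in>{1..n}. \<forall>S. io_simple_path E (inp m) out S \<longrightarrow>
        (\<exists>i j. i < j \<and> j < length S \<and> S ! i = a \<and> S ! j = b))"

definition abs_adjacent :: "('a \<times> 'a) set \<Rightarrow> (nat \<Rightarrow> 'a) \<Rightarrow> nat \<Rightarrow> 'a \<Rightarrow> 'a \<Rightarrow> 'a \<Rightarrow> bool" where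
  "abs_adjacent E inp n out a b \<longleftrightarrow>
     abs_super_simple E inp n out a \<and> abs_super_simple E inp n out b \<and>
     abs_before E inp n out a b \<and>
     \<not> (\<exists>c. abs_super_simple E inp n out c \<and> abs_before E inp n out a c \<and>
             abs_before E inp n out c b)"

definition visits_in_order :: "'a list \<Rightarrow> 'a \<Rightarrow> 'a \<Rightarrow> 'a \<Rightarrow> bool" where
  "visits_in_order S a v c \<longleftrightarrow>
     (\<exists>i j k. i \<le> j \<and> j \<le> k \<and> k < length S \<and> S ! i = a \<and> S ! j = v \<and> S ! k = c)"

definition Gm_nodes :: "'a set \<Rightarrow> ('a \<times> 'a) set \<Rightarrow> 'a \<Rightarrow> 'a \<Rightarrow> 'a set" where
  "Gm_nodes V E i out = {v\<in>V. downstream E i v \<and> downstream E v out}"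

definition path_equiv :: "('a \<times> 'a) set \<Rightarrow> 'a set \<Rightarrow> 'a \<Rightarrow> 'a \<Rightarrow> bool" where
  "path_equiv E K a b \<longleftrightarrow> a \<in> K \<and> b \<in> K \<and>
     downstream (E \<inter> (K \<times> K)) a b \<and> downstream (E \<inter> (K \<times> K)) b a"

definition Lm :: "('a \<times> 'a) set \<Rightarrow> 'a \<Rightarrow> 'a \<Rightarrow> 'a \<Rightarrow> 'a \<Rightarrow> 'a set" where
  "Lm E i out a b = {v. simple_node E i out v \<and>
       (\<exists>S. io_simple_path E i out S \<and> visits_in_order S a v b)}"

definition Labs :: "('a \<times> 'a) set \<Rightarrow> (nat \<Rightarrow> 'a) \<Rightarrow> nat \<Rightarrow> 'a \<Rightarrow> 'a \<Rightarrow> 'a \<Rightarrow> 'a set" where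
  "Labs E inp n out a b = {v. abs_simple E inp n out v \<and>
       (\<exists>m\<in>{1..n}. \<exists>S. io_simple_path E (inp m) out S \<and> visits_in_order S a v b)}"

definition Lm' :: "'a set \<Rightarrow> ('a \<times> 'a) set \<Rightarrow> 'a \<Rightarrow> 'a \<Rightarrow> 'a \<Rightarrow> 'a \<Rightarrow> 'a set \<times> ('a \<times> 'a) set" where
  "Lm' V E i out a b =
    (let G = Gm_nodes V E i out;
         N = Lm E i out a b \<union>
             {v. appendage_node E i out v \<and>
                 (\<exists>S. io_simple_path E i out S \<and>
                      (\<exists>u\<in>Lm E i out a b. path_equiv (E \<inter> (G \<times> G)) (G - set S) v u))}
     in (N, {(x, y). (x, y) \<in> E \<and> x \<in> N \<and> y \<in> N \<and> x \<in> G \<and> y \<in> G}))"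

definition Labs' :: "'a set \<Rightarrow> ('a \<times> 'a) set \<Rightarrow> (nat \<Rightarrow> 'a) \<Rightarrow> nat \<Rightarrow> 'a \<Rightarrow> 'a \<Rightarrow> 'a \<Rightarrow> 'a set \<times> ('a \<times> 'a) set" where
  "Labs' V E inp n out a b =
    (let N = Labs E inp n out a b \<union>
             {v. abs_appendage E inp n out v \<and>
                 (\<exists>m\<in>{1..n}. \<exists>S. io_simple_path E (inp m) out S \<and>
                      (\<exists>u\<in>Labs E inp n out a b. path_equiv E (V - set S) v u))}
     in (N, {(x, y). (x, y) \<in> E \<and> x \<in> N \<and> y \<in> N}))"

end

theory Submission
  imports Defs
begin

(* Every path from an input to o passes through a and through b, and on simple ones a comes
   first. Hence a node reachable from an input without passing a cannot reach b without passing
   a, and a node reachable from a without passing b cannot reach o without passing b. This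
   separation lets any simple a-b path replace the a-b segment of any simple input-output path,
   so for every input the nodes visited between a and b are exactly the nodes of simple a-b
   paths. For the appendages it shows that a node path-equivalent to such a node off some simple
   input-output path lies on no simple input-output path at all, and that the strongly connected
   component realising the equivalence off a path S' also avoids the path obtained from S' by
   exchanging its part before a for that of a simple path from any other input. *)

lemma is_path_singleton [simp]: "is_path E [x]"
  by (simp add: is_path_def)

lemma not_is_path_Nil [simp]: "\<not> is_path E []"
  by (simp add: is_path_def)

lemma is_path_Cons_Cons: "is_path E (x # y # ys) \<longleftrightarrow> (x, y) \<in> E \<and> is_path E (y # ys)"
  by (auto simp: is_path_def nth_Cons split: nat.splits)

lemma is_path_append:
  "xs \<noteq> [] \<Longrightarrow> ys \<noteq> [] \<Longrightarrow>
    is_path E (xs @ ys) \<longleftrightarrow> is_path E xs \<and> is_path E ys \<and> (last xs, hd ys) \<in> E"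
proof (induction xs rule: induct_list012)
  case (2 x)
  then show ?case by (cases ys) (auto simp: is_path_Cons_Cons)
next
  case (3 x y zs)
  then show ?case by (auto simp: is_path_Cons_Cons)
qed simp

lemma is_path_Cons: "ys \<noteq> [] \<Longrightarrow> is_path E (x # ys) \<longleftrightarrow> (x, hd ys) \<in> E \<and> is_path E ys"
  using is_path_append[of "[x]" ys E] by auto

lemma is_path_prefix: "is_path E (xs @ ys) \<Longrightarrow> xs \<noteq> [] \<Longrightarrow> is_path E xs"
  by (cases "ys = []") (auto simp: is_path_append)

lemma is_path_suffix: "is_path E (xs @ ys) \<Longrightarrow> ys \<noteq> [] \<Longrightarrow> is_path E ys"
  by (cases "xs = []") (auto simp: is_path_append)

lemma downstream_iff_rtrancl: "downstream E x y \<longleftrightarrow> (x, y) \<in> E\<^sup>*"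
proof
  assume "downstream E x y"
  then obtain xs where "is_path E xs" "hd xs = x" "last xs = y"
    by (auto simp: downstream_def)
  then show "(x, y) \<in> E\<^sup>*"
  proof (induction xs arbitrary: x rule: induct_list012)
    case (3 z w zs)
    then show ?case by (auto simp: is_path_Cons_Cons intro: converse_rtrancl_into_rtrancl)
  qed auto
next
  assume "(x, y) \<in> E\<^sup>*"
  then show "downstream E x y"
  proof (induction rule: converse_rtrancl_induct)
    case base
    show ?case unfolding downstream_def by (intro exI[of _ "[y]"]) (simp add: is_path_def)
  next
    case (step x z)
    then obtain xs where "is_path E xs" "hd xs = z" "last xs = y"
      by (auto simp: downstream_def)
    with step show ?case
      unfolding downstream_def by (intro exI[of _ "x # xs"]) (auto simp: is_path_Cons)
  qed
qed

lemma downstream_trans: "downstream E x y \<Longrightarrow> downstream E y z \<Longrightarrow> downstream E x z"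
  by (simp add: downstream_iff_rtrancl)

lemma downstream_closed:
  assumes "E \<subseteq> V \<times> V" "x \<in> V" "downstream E x y"
  shows "y \<in> V"
  using assms(3,1,2) unfolding downstream_iff_rtrancl by (induction rule: rtrancl_induct) auto

definition reach_in :: "('a \<times> 'a) set \<Rightarrow> 'a set \<Rightarrow> 'a \<Rightarrow> 'a \<Rightarrow> bool" where
  "reach_in E K x y \<longleftrightarrow> x \<in> K \<and> (x, y) \<in> (Restr E K)\<^sup>*"

lemma reach_in_trans: "reach_in E K x y \<Longrightarrow> reach_in E K y z \<Longrightarrow> reach_in E K x z"
  by (auto simp: reach_in_def)

lemma reach_in_mono: "reach_in E K x y \<Longrightarrow> K \<subseteq> L \<Longrightarrow> reach_in E L x y"
  unfolding reach_in_def by (meson Int_mono order_refl rtrancl_mono subsetD Sigma_mono)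

lemma reach_in_target: "reach_in E K x y \<Longrightarrow> y \<in> K"
  unfolding reach_in_def by (metis Int_iff mem_Sigma_iff rtranclE)

lemma reach_in_downstream: "reach_in E K x y \<Longrightarrow> downstream E x y"
  unfolding reach_in_def downstream_iff_rtrancl by (meson Int_lower1 rtrancl_mono subsetD)

lemma reach_in_UNIV_iff: "reach_in E UNIV x y \<longleftrightarrow> downstream E x y"
  by (simp add: reach_in_def downstream_iff_rtrancl)

lemma reach_in_path: "is_path E xs \<Longrightarrow> set xs \<subseteq> K \<Longrightarrow> reach_in E K (hd xs) (last xs)"
proof (induction xs rule: induct_list012)
  case (3 x y zs)
  then have "(x, y) \<in> Restr E K" "reach_in E K y (last (y # zs))"
    by (auto simp: is_path_Cons_Cons)
  then show ?case by (auto simp: reach_in_def intro: converse_rtrancl_into_rtrancl)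
qed (auto simp: reach_in_def)

lemma reach_in_path_to:
  assumes "is_path E xs" "x \<in> set xs"
  shows "reach_in E (set xs) (hd xs) x"
proof -
  obtain P R where xs: "xs = P @ x # R" using split_list[OF assms(2)] by blast
  then have "is_path E (P @ [x])" using assms(1) is_path_prefix[of E "P @ [x]" R] by simp
  then have "reach_in E (set (P @ [x])) (hd (P @ [x])) x"
    using reach_in_path[of E "P @ [x]" "set (P @ [x])"] by simp
  moreover have "hd (P @ [x]) = hd xs" using xs by (cases P) auto
  ultimately show ?thesis using xs by (auto elim: reach_in_mono)
qed

lemma reach_in_path_from:
  assumes "is_path E xs" "x \<in> set xs"
  shows "reach_in E (set xs) x (last xs)"
proof -
  obtain P R where xs: "xs = P @ x # R" using split_list[OF assms(2)] by blast
  then have "is_path E (x # R)" using assms(1) is_path_suffix[of E P "x # R"] by simp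
  then have "reach_in E (set (x # R)) x (last (x # R))"
    using reach_in_path[of E "x # R" "set (x # R)"] by simp
  then show ?thesis using xs by (auto elim: reach_in_mono)
qed

lemma reach_in_simple_path:
  assumes "reach_in E K x y"
  shows "\<exists>xs. io_simple_path E x y xs \<and> set xs \<subseteq> K"
proof -
  have "(x, y) \<in> (Restr E K)\<^sup>*" "x \<in> K" using assms by (auto simp: reach_in_def)
  then show ?thesis
  proof (induction rule: converse_rtrancl_induct)
    case base
    then show ?case by (intro exI[of _ "[y]"]) (simp add: io_simple_path_def)
  next
    case (step x z)
    then have edge: "(x, z) \<in> E" and "z \<in> K" by auto
    with step.IH obtain xs where xs: "io_simple_path E z y xs" "set xs \<subseteq> K" by blast
    show ?case
    proof (cases "x \<in> set xs")
      case True
      then obtain P R where PR: "xs = P @ x # R" using split_list by metis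
      then have "is_path E (x # R)" using xs(1) is_path_suffix[of E P "x # R"]
        by (simp add: io_simple_path_def)
      with PR xs show ?thesis
        by (intro exI[of _ "x # R"]) (auto simp: io_simple_path_def)
    next
      case False
      with xs edge step.prems show ?thesis
        by (intro exI[of _ "x # xs"]) (auto simp: io_simple_path_def is_path_Cons)
    qed
  qed
qed

lemma path_equiv_iff_reach_in: "path_equiv E K v u \<longleftrightarrow> reach_in E K v u \<and> reach_in E K u v"
  by (auto simp: path_equiv_def reach_in_def downstream_iff_rtrancl)

lemma path_equiv_Restr: "K \<subseteq> G \<Longrightarrow> path_equiv (Restr E G) K = path_equiv E K"
proof -
  assume "K \<subseteq> G"
  then have "Restr (Restr E G) K = Restr E K" by blast
  then show ?thesis by (simp add: path_equiv_def fun_eq_iff)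
qed

lemma path_equiv_mono: "path_equiv E K v u \<Longrightarrow> K \<subseteq> L \<Longrightarrow> path_equiv E L v u"
  by (auto simp: path_equiv_iff_reach_in elim: reach_in_mono)

lemma reach_in_through:
  assumes "reach_in E K x y"
  shows "reach_in E {w \<in> K. reach_in E K x w \<and> reach_in E K w y} x y"
proof -
  obtain xs where xs: "io_simple_path E x y xs" "set xs \<subseteq> K"
    using reach_in_simple_path[OF assms] by blast
  have "set xs \<subseteq> {w \<in> K. reach_in E K x w \<and> reach_in E K w y}"
  proof
    fix w assume "w \<in> set xs"
    then have "reach_in E (set xs) x w" "reach_in E (set xs) w y"
      using xs(1) reach_in_path_to[of E xs w] reach_in_path_from[of E xs w]
      by (auto simp: io_simple_path_def)
    with xs(2) \<open>w \<in> set xs\<close> show "w \<in> {w \<in> K. reach_in E K x w \<and> reach_in E K w y}"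
      by (auto elim: reach_in_mono)
  qed
  with xs show ?thesis
    using reach_in_path by (fastforce simp: io_simple_path_def)
qed

lemma path_equiv_component:
  assumes "path_equiv E K v u"
  shows "path_equiv E {w \<in> K. reach_in E K u w \<and> reach_in E K w u} v u"
proof -
  have vu: "reach_in E K v u" and uv: "reach_in E K u v"
    using assms by (auto simp: path_equiv_iff_reach_in)
  have "reach_in E {w \<in> K. reach_in E K u w \<and> reach_in E K w u} v u"
    using reach_in_through[OF vu] by (rule reach_in_mono) (auto intro: reach_in_trans[OF uv])
  moreover have "reach_in E {w \<in> K. reach_in E K u w \<and> reach_in E K w u} u v"
    using reach_in_through[OF uv] by (rule reach_in_mono) (auto intro: reach_in_trans[OF _ vu])
  ultimately show ?thesis by (simp add: path_equiv_iff_reach_in)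
qed

lemma simple_node_downstream:
  assumes "simple_node E x y v"
  shows "downstream E x v" "downstream E v y"
  using assms reach_in_path_to[of E _ v] reach_in_path_from[of E _ v]
  by (auto simp: simple_node_def io_simple_path_def intro: reach_in_downstream)

lemma io_simple_path_split:
  assumes "io_simple_path E s t (P @ c # T)"
  shows "io_simple_path E s c (P @ [c])" "io_simple_path E c t (c # T)"
  using assms is_path_prefix[of E "P @ [c]" T] is_path_suffix[of E P "c # T"]
  by (auto simp: io_simple_path_def hd_append)

lemma io_simple_path_join:
  assumes "io_simple_path E s c (P @ [c])" "io_simple_path E c t (c # T)"
    and "set P \<inter> set T = {}"
  shows "io_simple_path E s t (P @ c # T)"
proof -
  have "is_path E ((P @ [c]) @ T)"
    using assms(1,2) is_path_append[of "P @ [c]" T E]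
    by (cases "T = []") (auto simp: io_simple_path_def is_path_Cons)
  with assms show ?thesis by (auto simp: io_simple_path_def hd_append)
qed

lemma reach_in_avoiding_before:
  assumes "io_simple_path E s t (P @ c # T)" "x \<in> set P"
  shows "reach_in E (- {c}) s x"
proof -
  have "P \<noteq> []" using assms(2) by auto
  with assms have "is_path E P" "hd P = s" "c \<notin> set P"
    using is_path_prefix[of E P "c # T"] by (auto simp: io_simple_path_def)
  with assms(2) show ?thesis using reach_in_path_to[of E P x] by (auto elim: reach_in_mono)
qed

lemma reach_in_avoiding_after:
  assumes "io_simple_path E s t (P @ c # T)" "x \<in> set T"
  shows "reach_in E (- {c}) x t"
proof -
  have "T \<noteq> []" using assms(2) by auto
  with assms have "is_path E T" "last T = t" "c \<notin> set T"
    using is_path_suffix[of E "P @ [c]" T] by (auto simp: io_simple_path_def)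
  with assms(2) show ?thesis using reach_in_path_from[of E T x] by (auto elim: reach_in_mono)
qed

lemma io_simple_path_ends:
  assumes "io_simple_path E x y Q" "x \<noteq> y"
  obtains Q' where "Q = x # Q' @ [y]"
proof -
  obtain z Q1 where "Q = z # Q1" "z = x" using assms by (cases Q) (auto simp: io_simple_path_def)
  moreover have "Q1 \<noteq> []" "last Q1 = y" using assms calculation by (auto simp: io_simple_path_def)
  ultimately show ?thesis using that append_butlast_last_id[of Q1] by metis
qed

lemma simple_node_if_visits_in_order:
  assumes "io_simple_path E s t S" "visits_in_order S x y z"
  shows "simple_node E x z y"
proof -
  obtain i j k where ijk: "i \<le> j" "j \<le> k" "k < length S" "S ! i = x" "S ! j = y" "S ! k = z"
    using assms(2) by (auto simp: visits_in_order_def)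
  define T where "T = drop i (take (Suc k) S)"
  have "is_path E T" using assms(1) ijk by (auto simp: T_def io_simple_path_def is_path_def)
  moreover have "distinct T" using assms(1) by (simp add: T_def io_simple_path_def)
  moreover have "hd T = x" using ijk by (simp add: T_def hd_drop_conv_nth)
  moreover have "last T = z" using ijk by (simp add: T_def take_Suc_conv_app_nth)
  moreover have "y \<in> set T" using ijk by (auto simp: T_def in_set_conv_nth intro!: exI[of _ "j - i"])
  ultimately show ?thesis by (auto simp: simple_node_def io_simple_path_def)
qed

lemma visits_in_order_infix:
  assumes "y \<in> set M"
  shows "visits_in_order (P @ M @ R) (hd M) y (last M)"
proof -
  obtain p where p: "p < length M" "M ! p = y" by (meson assms in_set_conv_nth)
  then have M: "M \<noteq> []" by auto
  have nth: "(P @ M @ R) ! (length P + q) = M ! q" if "q < length M" for q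
    using that by (simp add: nth_append)
  show ?thesis unfolding visits_in_order_def
  proof (rule exI[of _ "length P"], rule exI[of _ "length P + p"],
      rule exI[of _ "length P + (length M - 1)"])
  qed (use p M nth[of 0] nth[of p] nth[of "length M - 1"] in \<open>auto simp: hd_conv_nth last_conv_nth\<close>)
qed

lemma abs_super_simple_blocks:
  assumes "abs_super_simple E inp n out c" "m \<in> {1..n}"
    and "reach_in E (- {c}) (inp m) x" "reach_in E (- {c}) x out"
  shows False
proof -
  obtain S where "io_simple_path E (inp m) out S" "set S \<subseteq> - {c}"
    using reach_in_simple_path[OF reach_in_trans[OF assms(3,4)]] by blast
  with assms(1,2) show False by (auto simp: abs_super_simple_def)
qed

locale super_simple_pair =
  fixes V :: "'a set" and E :: "('a \<times> 'a) set" and inp :: "nat \<Rightarrow> 'a"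
    and n :: nat and out a b :: 'a
  assumes core: "core_network V E inp n out"
    and super_simple_a: "abs_super_simple E inp n out a"
    and super_simple_b: "abs_super_simple E inp n out b"
    and a_before_b: "abs_before E inp n out a b"
begin

lemma one_in_inputs: "1 \<in> {1..n}"
  using core by (simp add: core_network_def)

lemma inp_in_V: "m \<in> {1..n} \<Longrightarrow> inp m \<in> V"
  using core by (auto simp: core_network_def)

lemma io_simple_path_exists:
  assumes "m \<in> {1..n}"
  obtains S where "io_simple_path E (inp m) out S"
proof -
  have "inp m \<in> V" "\<forall>v\<in>V. downstream E v out"
    using assms inp_in_V core by (auto simp: core_network_def)
  then have "reach_in E UNIV (inp m) out" by (simp add: reach_in_UNIV_iff)
  then show ?thesis using that reach_in_simple_path[of E UNIV] by auto
qed

lemma io_simple_path_through_a_b: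
  assumes "m \<in> {1..n}" "io_simple_path E (inp m) out S"
  obtains P M R where "S = P @ a # M @ b # R"
proof -
  obtain i j where ij: "i < j" "j < length S" "S ! i = a" "S ! j = b"
    using assms a_before_b by (force simp: abs_before_def)
  have "a \<in> set (take j S)" using ij by (auto simp: in_set_conv_nth intro!: exI[of _ i])
  then obtain P M where "take j S = P @ a # M" using split_list by metis
  moreover have "S = take j S @ b # drop (Suc j) S" using id_take_nth_drop[of j S] ij by simp
  ultimately show ?thesis using that by simp
qed

lemma input_reach_in_a: "m \<in> {1..n} \<Longrightarrow> reach_in E (- {b}) (inp m) a"
proof -
  assume m: "m \<in> {1..n}"
  then obtain S where S: "io_simple_path E (inp m) out S" by (rule io_simple_path_exists)
  then obtain P M R where "S = P @ a # M @ b # R" using io_simple_path_through_a_b m by metis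
  with S show ?thesis using reach_in_avoiding_before[of E "inp m" out "P @ a # M" b R a] by simp
qed

lemma b_reach_in_out: "reach_in E (- {a}) b out"
proof -
  obtain S where S: "io_simple_path E (inp 1) out S"
    using io_simple_path_exists[OF one_in_inputs] .
  then obtain P M R where "S = P @ a # M @ b # R"
    using io_simple_path_through_a_b one_in_inputs by metis
  with S show ?thesis using reach_in_avoiding_after[of E "inp 1" out P a "M @ b # R" b] by simp
qed

lemma a_neq_b: "a \<noteq> b"
  using reach_in_target[OF input_reach_in_a[OF one_in_inputs]] by blast

lemma no_bypass_a:
  "m \<in> {1..n} \<Longrightarrow> reach_in E (- {a}) (inp m) x \<Longrightarrow> reach_in E (- {a}) x b \<Longrightarrow> False"
  using abs_super_simple_blocks[OF super_simple_a] b_reach_in_out reach_in_trans by metis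

lemma no_bypass_b:
  "m \<in> {1..n} \<Longrightarrow> reach_in E (- {b}) a x \<Longrightarrow> reach_in E (- {b}) x out \<Longrightarrow> False"
  using abs_super_simple_blocks[OF super_simple_b] input_reach_in_a reach_in_trans by metis

lemma between_reach_in_b:
  assumes "simple_node E a b u" "u \<noteq> a"
  shows "reach_in E (- {a}) u b"
proof -
  obtain Q where Q: "io_simple_path E a b Q" "u \<in> set Q" using assms(1) by (auto simp: simple_node_def)
  obtain Q' where "Q = a # Q' @ [b]" by (rule io_simple_path_ends[OF Q(1) a_neq_b])
  with Q assms(2) show ?thesis using reach_in_avoiding_after[of E a b "[]" a "Q' @ [b]" u] by simp
qed

lemma a_reach_in_between:
  assumes "simple_node E a b u" "u \<noteq> b"
  shows "reach_in E (- {b}) a u"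
proof -
  obtain Q where Q: "io_simple_path E a b Q" "u \<in> set Q" using assms(1) by (auto simp: simple_node_def)
  obtain Q' where "Q = a # Q' @ [b]" by (rule io_simple_path_ends[OF Q(1) a_neq_b])
  with Q assms(2) show ?thesis using reach_in_avoiding_before[of E a b "a # Q'" b "[]" u] by simp
qed

lemma splice_at_a:
  assumes "m \<in> {1..n}" "io_simple_path E (inp m) out (P @ a # T0)" "io_simple_path E a out (a # T)"
  shows "io_simple_path E (inp m) out (P @ a # T)"
proof (rule io_simple_path_join)
  show "io_simple_path E (inp m) a (P @ [a])" using io_simple_path_split(1)[OF assms(2)] .
  show "set P \<inter> set T = {}"
    using assms reach_in_avoiding_before[OF assms(2)] reach_in_avoiding_after[of E a out "[]" a T]
      abs_super_simple_blocks[OF super_simple_a] by fastforce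
qed (rule assms(3))

lemma splice_at_b:
  assumes "m \<in> {1..n}" "io_simple_path E a b (a # Q @ [b])" "io_simple_path E (inp m) out (P @ b # R)"
  shows "io_simple_path E a out (a # Q @ b # R)"
proof -
  have "set (a # Q) \<inter> set R = {}"
    using reach_in_avoiding_before[of E a b "a # Q" b "[]"] assms(2)
      reach_in_avoiding_after[OF assms(3)] no_bypass_b[OF assms(1)] by fastforce
  then show ?thesis
    using io_simple_path_join[of E a b "a # Q" out R] assms(2) io_simple_path_split(2)[OF assms(3)]
    by simp
qed

lemma between_on_io_simple_path:
  assumes "m \<in> {1..n}" "simple_node E a b v"
  shows "\<exists>S. io_simple_path E (inp m) out S \<and> visits_in_order S a v b"
proof -
  obtain Q where Q: "io_simple_path E a b Q" "v \<in> set Q" using assms(2) by (auto simp: simple_node_def)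
  obtain Q' where Q': "Q = a # Q' @ [b]" by (rule io_simple_path_ends[OF Q(1) a_neq_b])
  obtain S0 where S0: "io_simple_path E (inp m) out S0" using io_simple_path_exists assms(1) .
  then obtain P M R where S0_split: "S0 = P @ a # M @ b # R"
    using io_simple_path_through_a_b assms(1) by metis
  have "io_simple_path E a out (a # Q' @ b # R)"
    using splice_at_b[OF assms(1)] Q Q' S0 S0_split by (metis append.assoc append_Cons)
  then have "io_simple_path E (inp m) out (P @ a # Q' @ b # R)"
    using splice_at_a[OF assms(1)] S0 S0_split by blast
  moreover have "visits_in_order (P @ (a # Q' @ [b]) @ R) a v b"
    using visits_in_order_infix[of v "a # Q' @ [b]" P R] Q Q' by simp
  ultimately show ?thesis by auto
qed

lemma between_simple_node:
  assumes "m \<in> {1..n}" "simple_node E a b v"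
  shows "simple_node E (inp m) out v"
proof -
  obtain S where "io_simple_path E (inp m) out S" "visits_in_order S a v b"
    using between_on_io_simple_path[OF assms] by blast
  then show ?thesis by (auto simp: simple_node_def visits_in_order_def)
qed

lemma Lm_eq:
  assumes "m \<in> {1..n}"
  shows "Lm E (inp m) out a b = {v. simple_node E a b v}"
proof (intro set_eqI iffI)
  fix v assume "v \<in> Lm E (inp m) out a b"
  then show "v \<in> {v. simple_node E a b v}"
    by (auto simp: Lm_def intro: simple_node_if_visits_in_order)
next
  fix v assume "v \<in> {v. simple_node E a b v}"
  then show "v \<in> Lm E (inp m) out a b"
    using between_on_io_simple_path[OF assms] between_simple_node[OF assms] by (simp add: Lm_def)
qed

lemma Labs_eq: "Labs E inp n out a b = {v. simple_node E a b v}"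
proof (intro set_eqI iffI)
  fix v assume "v \<in> Labs E inp n out a b"
  then show "v \<in> {v. simple_node E a b v}"
    by (auto simp: Labs_def intro: simple_node_if_visits_in_order)
next
  fix v assume v: "v \<in> {v. simple_node E a b v}"
  have "abs_simple E inp n out v" using v between_simple_node by (simp add: abs_simple_def)
  moreover have "\<exists>S. io_simple_path E (inp 1) out S \<and> visits_in_order S a v b"
    using v between_on_io_simple_path[OF one_in_inputs] by simp
  ultimately show "v \<in> Labs E inp n out a b" using one_in_inputs unfolding Labs_def by blast
qed

lemma between_in_Gm:
  assumes "m \<in> {1..n}" "simple_node E a b u"
  shows "u \<in> Gm_nodes V E (inp m) out"
proof -
  have "downstream E (inp m) u"
    using downstream_trans reach_in_downstream[OF input_reach_in_a[OF assms(1)]]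
      simple_node_downstream(1)[OF assms(2)] .
  moreover have "downstream E u out"
    using downstream_trans simple_node_downstream(2)[OF assms(2)]
      reach_in_downstream[OF b_reach_in_out] .
  moreover have "u \<in> V"
    using downstream_closed[of E V "inp m"] calculation(1) inp_in_V[OF assms(1)] core
    by (simp add: core_network_def)
  ultimately show ?thesis by (simp add: Gm_nodes_def)
qed

lemma cycle_through_between_not_simple:
  assumes "m \<in> {1..n}" "io_simple_path E (inp m) out S" "simple_node E a b u"
    and "path_equiv E (- set S) v u" "\<not> simple_node E a b v" "m' \<in> {1..n}"
  shows "\<not> simple_node E (inp m') out v"
proof
  assume "simple_node E (inp m') out v"
  then obtain S' where S': "io_simple_path E (inp m') out S'" "v \<in> set S'"
    by (auto simp: simple_node_def)
  then obtain P M R where S'_split: "S' = P @ a # M @ b # R"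
    using io_simple_path_through_a_b assms(6) by metis
  have "a \<in> set S" "b \<in> set S"
    using assms(1,2) super_simple_a super_simple_b by (auto simp: abs_super_simple_def)
  moreover have "u \<notin> set S" using assms(4) by (simp add: path_equiv_def)
  ultimately have vu: "reach_in E (- {a}) v u" and uv: "reach_in E (- {b}) u v" and "u \<noteq> a" "u \<noteq> b"
    using assms(4) by (auto simp: path_equiv_iff_reach_in elim: reach_in_mono)
  from S'(2) S'_split consider "v \<in> set P" | "v \<in> set (a # M @ [b])" | "v \<in> set R" by auto
  then show False
  proof cases
    case 1
    then have "reach_in E (- {a}) (inp m') v"
      using S' S'_split reach_in_avoiding_before[of E "inp m'" out P a "M @ b # R"] by simp
    then show False
      using no_bypass_a assms(6) reach_in_trans[OF vu between_reach_in_b] assms(3) \<open>u \<noteq> a\<close>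
      by blast
  next
    case 2
    then have "visits_in_order (P @ (a # M @ [b]) @ R) a v b"
      using visits_in_order_infix[of v "a # M @ [b]" P R] by simp
    then show False
      using assms(5) S' S'_split simple_node_if_visits_in_order by fastforce
  next
    case 3
    then have "reach_in E (- {b}) v out"
      using S' S'_split reach_in_avoiding_after[of E "inp m'" out "P @ a # M" b R] by simp
    then show False
      using no_bypass_b assms(6) reach_in_trans[OF a_reach_in_between uv] assms(3) \<open>u \<noteq> b\<close>
      by blast
  qed
qed

text \<open>The appendage parts of \<^const>\<open>Lm'\<close> and \<^const>\<open>Labs'\<close>, with \<^const>\<open>Lm\<close> and \<^const>\<open>Labs\<close>
  already replaced by the nodes of simple a-b paths.\<close>

definition Lm_appendages :: "nat \<Rightarrow> 'a set" where
  "Lm_appendages m = {v. appendage_node E (inp m) out v \<and>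
     (\<exists>S. io_simple_path E (inp m) out S \<and>
       (\<exists>u. simple_node E a b u \<and> path_equiv E (Gm_nodes V E (inp m) out - set S) v u))}"

definition Labs_appendages :: "'a set" where
  "Labs_appendages = {v. abs_appendage E inp n out v \<and>
     (\<exists>m\<in>{1..n}. \<exists>S. io_simple_path E (inp m) out S \<and>
       (\<exists>u. simple_node E a b u \<and> path_equiv E (V - set S) v u))}"

lemma Lm_appendages_subset:
  assumes "m \<in> {1..n}"
  shows "Lm_appendages m \<subseteq> Labs_appendages"
proof
  fix v assume "v \<in> Lm_appendages m"
  then obtain S u where app: "appendage_node E (inp m) out v" and S: "io_simple_path E (inp m) out S"
    and u: "simple_node E a b u" and equiv: "path_equiv E (Gm_nodes V E (inp m) out - set S) v u"
    by (auto simp: Lm_appendages_def)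
  have not_between: "\<not> simple_node E a b v"
    using app between_simple_node[OF assms] by (auto simp: appendage_node_def)
  have "abs_appendage E inp n out v"
    unfolding abs_appendage_def appendage_node_def
  proof (intro ballI conjI)
    fix m' assume m': "m' \<in> {1..n}"
    have "downstream E u v" using equiv by (auto simp: path_equiv_iff_reach_in intro: reach_in_downstream)
    then show "downstream E (inp m') v"
      using reach_in_downstream[OF input_reach_in_a[OF m']] simple_node_downstream(1)[OF u]
      by (blast intro: downstream_trans)
    show "\<not> simple_node E (inp m') out v"
      using cycle_through_between_not_simple[OF assms S u _ not_between m'] path_equiv_mono[OF equiv]
      by blast
  qed
  moreover have "path_equiv E (V - set S) v u"
    using equiv by (rule path_equiv_mono) (auto simp: Gm_nodes_def)
  ultimately show "v \<in> Labs_appendages"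
    unfolding Labs_appendages_def using assms S u by blast
qed

lemma Labs_appendages_subset:
  assumes "m \<in> {1..n}"
  shows "Labs_appendages \<subseteq> Lm_appendages m"
proof
  fix v assume "v \<in> Labs_appendages"
  then obtain m' S' u where app: "abs_appendage E inp n out v" and m': "m' \<in> {1..n}"
    and S': "io_simple_path E (inp m') out S'" and u: "simple_node E a b u"
    and equiv: "path_equiv E (V - set S') v u"
    by (auto simp: Labs_appendages_def)
  have "a \<in> set S'" using m' S' super_simple_a by (auto simp: abs_super_simple_def)
  then obtain P' T' where S'_split: "S' = P' @ a # T'" by (meson split_list)
  obtain S0 where S0: "io_simple_path E (inp m) out S0" using io_simple_path_exists[OF assms] .
  have "a \<in> set S0" using assms S0 super_simple_a by (auto simp: abs_super_simple_def)
  then obtain P0 T0 where S0_split: "S0 = P0 @ a # T0" by (meson split_list)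
  \<comment> \<open>S' with its part before a exchanged for that of an m-path. The strong component of u
    off S' misses the new part P0: from a node of P0 one could get from \<open>inp m\<close> to b avoiding a.\<close>
  define S where "S = P0 @ a # T'"
  have S: "io_simple_path E (inp m) out S"
    unfolding S_def using splice_at_a[OF assms] S0 S0_split S' S'_split io_simple_path_split(2)
    by metis
  let ?K = "V - set S'"
  have u_K: "u \<in> ?K" using equiv by (simp add: path_equiv_def)
  have "{w \<in> ?K. reach_in E ?K u w \<and> reach_in E ?K w u} \<subseteq> Gm_nodes V E (inp m) out - set S"
  proof
    fix w assume w: "w \<in> {w \<in> ?K. reach_in E ?K u w \<and> reach_in E ?K w u}"
    then have "downstream E u w" "downstream E w u" by (auto intro: reach_in_downstream)
    moreover have "downstream E (inp m) u" "downstream E u out"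
      using between_in_Gm[OF assms u] by (auto simp: Gm_nodes_def)
    ultimately have "downstream E (inp m) w" "downstream E w out" by (blast intro: downstream_trans)+
    moreover have "w \<notin> set P0"
    proof
      assume "w \<in> set P0"
      then have "reach_in E (- {a}) (inp m) w"
        using S0 S0_split reach_in_avoiding_before by metis
      moreover have "reach_in E (- {a}) w u"
        using w \<open>a \<in> set S'\<close> by (auto elim: reach_in_mono)
      moreover have "reach_in E (- {a}) u b"
        using u_K \<open>a \<in> set S'\<close> between_reach_in_b[OF u] by auto
      ultimately have "reach_in E (- {a}) w b" using reach_in_trans by metis
      with \<open>reach_in E (- {a}) (inp m) w\<close> show False using no_bypass_a[OF assms] by blast
    qed
    ultimately show "w \<in> Gm_nodes V E (inp m) out - set S"
      using w S'_split by (auto simp: Gm_nodes_def S_def)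
  qed
  then have "path_equiv E (Gm_nodes V E (inp m) out - set S) v u"
    using path_equiv_component[OF equiv] by (rule path_equiv_mono[rotated])
  moreover have "appendage_node E (inp m) out v" using app assms by (simp add: abs_appendage_def)
  ultimately show "v \<in> Lm_appendages m"
    unfolding Lm_appendages_def using S u by blast
qed

lemma Lm'_eq_Labs':
  assumes "m \<in> {1..n}"
  shows "Lm' V E (inp m) out a b = Labs' V E inp n out a b"
proof -
  let ?G = "Gm_nodes V E (inp m) out"
  let ?N = "{v. simple_node E a b v} \<union> Labs_appendages"
  have "Lm_appendages m = Labs_appendages"
    using Lm_appendages_subset Labs_appendages_subset assms by blast
  moreover have "Lm' V E (inp m) out a b =
      ({v. simple_node E a b v} \<union> Lm_appendages m,
       {(x, y). (x, y) \<in> E \<and> x \<in> {v. simple_node E a b v} \<union> Lm_appendages m \<and>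
          y \<in> {v. simple_node E a b v} \<union> Lm_appendages m \<and> x \<in> ?G \<and> y \<in> ?G})"
    by (simp add: Lm'_def Let_def Lm_eq[OF assms] path_equiv_Restr Lm_appendages_def)
  ultimately have Lm': "Lm' V E (inp m) out a b =
      (?N, {(x, y). (x, y) \<in> E \<and> x \<in> ?N \<and> y \<in> ?N \<and> x \<in> ?G \<and> y \<in> ?G})"
    by simp
  have Labs': "Labs' V E inp n out a b = (?N, {(x, y). (x, y) \<in> E \<and> x \<in> ?N \<and> y \<in> ?N})"
    by (simp add: Labs'_def Let_def Labs_eq Labs_appendages_def)
  have "?N \<subseteq> ?G"
    using between_in_Gm[OF assms] \<open>Lm_appendages m = Labs_appendages\<close>
    by (auto simp: Lm_appendages_def path_equiv_def)
  then show ?thesis unfolding Lm' Labs' by blast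
qed

end

theorem lemma3p23:
  fixes V :: "'a set" and E :: "('a \<times> 'a) set" and inp :: "nat \<Rightarrow> 'a"
    and n :: nat and out a b :: 'a
  assumes "core_network V E inp n out"
    and "abs_adjacent E inp n out a b"
  shows "\<forall>m\<in>{1..n}. Lm' V E (inp m) out a b = Labs' V E inp n out a b"
proof -
  interpret super_simple_pair V E inp n out a b
    using assms by unfold_locales (simp_all add: abs_adjacent_def)
  show ?thesis using Lm'_eq_Labs' by blast
qed

end
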